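(* Let $p\equiv 3\pmod 4$ be a prime and $t\in\mathbb{F}_p$. The equation $y^2=x^3-(t^2+1)x$ over $\mathbb{F}_p$ defines a supersingular elliptic curve $E_t/\mathbb{F}_p$, and the point $(-1,t)$ is not divisible by $2$ in $E_t(\mathbb{F}_p)$, i.e. there is no $Q\in E_t(\mathbb{F}_p)$ with $2Q=(-1,t)$. *)

theory Defs
  imports "Berlekamp_Zassenhaus.Finite_Field"
begin

text \<open>Points of a short Weierstrass curve y^2 = x^3 + a x + b over a field
  (characteristic different from 2), in affine coordinates plus the point at infinity.\<close>

datatype 'a ec_point = Inf | Pt 'a 'a

definition on_curve :: "'a::field \<Rightarrow> 'a \<Rightarrow> 'a ec_point \<Rightarrow> bool" where
  "on_curve a b P = (case P of Inf \<Rightarrow> True | Pt x y \<Rightarrow> y^2 = x^3 + a*x + b)"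

definition elliptic_curve :: "'a::field \<Rightarrow> 'a \<Rightarrow> bool" where
  "elliptic_curve a b = (4*a^3 + 27*b^2 \<noteq> 0)"

text \<open>The chord-tangent group law (valid in characteristic not 2).\<close>
fun ec_add :: "'a::field \<Rightarrow> 'a ec_point \<Rightarrow> 'a ec_point \<Rightarrow> 'a ec_point" where
  "ec_add a Inf Q = Q"
| "ec_add a (Pt x1 y1) Inf = Pt x1 y1"
| "ec_add a (Pt x1 y1) (Pt x2 y2) =
     (if x1 = x2 then
        (if y1 = - y2 then Inf
         else (let l = (3 * x1^2 + a) / (2 * y1); x3 = l^2 - 2 * x1
               in Pt x3 (l * (x1 - x3) - y1)))
      else (let l = (y2 - y1) / (x2 - x1); x3 = l^2 - x1 - x2
            in Pt x3 (l * (x1 - x3) - y1)))"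

text \<open>Supersingularity of an elliptic curve over the prime field F_p: the trace of
  Frobenius p + 1 - #E(F_p) is divisible by p, i.e. #E(F_p) = 1 (mod p).\<close>
definition supersingular :: "'p::{finite,prime_card} mod_ring \<Rightarrow> 'p mod_ring \<Rightarrow> bool" where
  "supersingular a b = (card {P. on_curve a b P} mod CARD('p) = 1)"

end

theory Submission
  imports Defs "Berlekamp_Zassenhaus.Berlekamp_Type_Based"
begin

text \<open>For \<open>p = 3 (mod 4)\<close>, \<open>-1\<close> is not a square in \<open>F_p\<close>, so for every nonzero \<open>c\<close> exactly one
  of \<open>c\<close>, \<open>-c\<close> is a square. As \<open>f x = x^3 + a x\<close> is odd, the fibres over \<open>x\<close> and \<open>-x\<close> of
  \<open>y^2 = f x\<close> together contain two points, hence \<open>#E(F_p) = p + 1\<close>: the curve is supersingular.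
  On \<open>y^2 = x^3 + a x\<close> the \<open>x\<close>-coordinate of \<open>2Q\<close> is the square \<open>((x^2 - a)/(2y))^2\<close>,
  which is never \<open>-1\<close>, so the point \<open>(-1, t)\<close> is not a double.\<close>

lemma minus_one_not_square_mod_ring:
  assumes "CARD('p::prime_card) mod 4 = 3"
  shows "(z::'p mod_ring)^2 \<noteq> -1"
proof
  assume z: "z^2 = -1"
  have "\<exists>k. CARD('p) + 1 = 2 * (2 * k + 2)"
    using assms by presburger
  then obtain k where k: "CARD('p) + 1 = 2 * (2 * k + 2)" ..
  have "-1 = z * z ^ CARD('p)"
    by (simp add: z flip: power2_eq_square)
  also have "\<dots> = z ^ (CARD('p) + 1)"
    by simp
  also have "\<dots> = (z^2) ^ (2 * k + 2)"
    by (simp only: k power_mult)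
  also have "\<dots> = 1"
    by (simp add: z)
  finally have "(of_nat 2 :: 'p mod_ring) = 0"
    by (simp add: eq_neg_iff_add_eq_0)
  then have "CARD('p) dvd 2"
    by (rule of_nat_0_mod_ring_dvd)
  with assms show False
    by (auto dest: dvd_imp_le)
qed

definition sqrts :: "'a::field \<Rightarrow> 'a set" where
  "sqrts c = {y. y^2 = c}"

lemma card_sqrts_le_2: "card (sqrts (c::'a::field)) \<le> 2"
proof (cases "sqrts c = {}")
  case False
  then obtain s where "s^2 = c" by (auto simp: sqrts_def)
  then have "sqrts c = {s, -s}"
    by (auto simp: sqrts_def power2_eq_iff)
  then show ?thesis
    by (simp add: card_insert_if)
qed simp

lemma sqrts_0 [simp]: "sqrts (0::'a::field) = {0}"
  by (auto simp: sqrts_def)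

lemma sqrts_empty_or_sqrts_neg_empty:
  fixes c :: "'a::field"
  assumes "\<And>z::'a. z^2 \<noteq> -1" and "c \<noteq> 0"
  shows "sqrts c = {} \<or> sqrts (-c) = {}"
proof (rule ccontr)
  assume "\<not> ?thesis"
  then obtain y z where y: "y^2 = c" and z: "z^2 = -c"
    by (auto simp: sqrts_def)
  with \<open>c \<noteq> 0\<close> have "(z/y)^2 = -1"
    by (auto simp: power_divide)
  with assms(1) show False by blast
qed

lemma sum_card_sqrts: "(\<Sum>c\<in>UNIV. card (sqrts (c::'a::{field,finite}))) = CARD('a)"
proof -
  have "UNIV = (\<Union>c. sqrts (c::'a))"
    by (auto simp: sqrts_def)
  then have "CARD('a) = card (\<Union>c. sqrts (c::'a))"
    by simp
  also have "\<dots> = (\<Sum>c::'a\<in>UNIV. card (sqrts c))"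
    by (rule card_UN_disjoint) (auto simp: sqrts_def)
  finally show ?thesis ..
qed

lemma sum_UNIV_uminus: "(\<Sum>c\<in>UNIV. g (- (c::'a::{ab_group_add,finite}))) = (\<Sum>c\<in>UNIV. g c)"
  by (rule sum.reindex_bij_witness[where i=uminus and j=uminus]) auto

text \<open>Each of the summands below is at most 2 and together they add up to twice the number of
  field elements, so every one of them equals 2: this avoids Euler's criterion.\<close>
lemma card_sqrts_add_card_sqrts_neg:
  fixes c :: "'a::{field,finite}"
  assumes "\<And>z::'a. z^2 \<noteq> -1"
  shows "card (sqrts c) + card (sqrts (-c)) = 2"
proof -
  let ?n = "\<lambda>c::'a. card (sqrts c) + card (sqrts (-c))"
  have le: "?n c \<le> 2" for c
    using sqrts_empty_or_sqrts_neg_empty[OF assms, of c] card_sqrts_le_2[of c] card_sqrts_le_2[of "-c"]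
    by (cases "c = 0") auto
  have "(\<Sum>c\<in>UNIV. ?n c) = (\<Sum>c::'a\<in>UNIV. 2)"
    by (simp add: sum.distrib sum_UNIV_uminus[where g="\<lambda>c. card (sqrts c)"] sum_card_sqrts)
  then show ?thesis
    by (rule sum_mono_inv) (use le in auto)
qed

lemma sum_card_sqrts_odd:
  fixes f :: "'a::{field,finite} \<Rightarrow> 'a"
  assumes "\<And>z::'a. z^2 \<noteq> -1" and odd: "\<And>x. f (-x) = - f x"
  shows "(\<Sum>x\<in>UNIV. card (sqrts (f x))) = CARD('a)"
proof -
  have "2 * (\<Sum>x\<in>UNIV. card (sqrts (f x))) = (\<Sum>x\<in>UNIV. card (sqrts (f x)) + card (sqrts (f (-x))))"
    by (simp add: sum.distrib sum_UNIV_uminus[where g="\<lambda>x. card (sqrts (f x))"])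
  also have "\<dots> = 2 * CARD('a)"
    by (simp add: odd card_sqrts_add_card_sqrts_neg[OF assms(1)])
  finally show ?thesis by simp
qed

lemma card_on_curve:
  fixes a b :: "'a::{field,finite}"
  shows "card {P. on_curve a b P} = (\<Sum>x\<in>UNIV. card (sqrts (x^3 + a*x + b))) + 1"
proof -
  have points: "{P. on_curve a b P} = insert Inf (\<Union>x. Pt x ` sqrts (x^3 + a*x + b))"
  proof (rule Set.set_eqI)
    show "P \<in> {P. on_curve a b P} \<longleftrightarrow> P \<in> insert Inf (\<Union>x. Pt x ` sqrts (x^3 + a*x + b))" for P
      by (cases P) (auto simp: on_curve_def sqrts_def)
  qed
  have fibres: "card (\<Union>x. Pt x ` sqrts (x^3 + a*x + b)) = (\<Sum>x\<in>UNIV. card (sqrts (x^3 + a*x + b)))"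
    by (subst card_UN_disjoint) (auto intro!: sum.cong card_image simp: inj_on_def)
  show ?thesis
    unfolding points by (subst card_insert_disjoint) (auto simp: fibres)
qed

lemma card_on_curve_b0:
  fixes a :: "'a::{field,finite}"
  assumes "\<And>z::'a. z^2 \<noteq> -1"
  shows "card {P. on_curve a 0 P} = CARD('a) + 1"
  using sum_card_sqrts_odd[OF assms, of "\<lambda>x. x^3 + a*x"] by (simp add: card_on_curve)

lemma ec_double_x:
  fixes a x y :: "'a::field"
  assumes "(2::'a) \<noteq> 0" "y^2 = x^3 + a*x" "ec_add a (Pt x y) (Pt x y) = Pt x' y'"
  shows "x' = ((x^2 - a) / (2*y))^2"
proof -
  have "y \<noteq> 0"
    using assms(3) by auto
  with assms(1) have "(2 * y)^2 \<noteq> 0"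
    by (intro power_not_zero no_zero_divisors)
  have "x' = ((3 * x^2 + a) / (2 * y))^2 - 2 * x"
    using assms(3) by (auto simp: Let_def split: if_splits)
  also have "\<dots> = ((3 * x^2 + a)^2 - 2 * x * (2 * y)^2) / (2 * y)^2"
    by (simp only: power_divide diff_divide_distrib nonzero_mult_div_cancel_right[OF \<open>(2 * y)^2 \<noteq> 0\<close>])
  also have "(3 * x^2 + a)^2 - 2 * x * (2 * y)^2 = (x^2 - a)^2"
    unfolding power_mult_distrib assms(2) by (simp add: algebra_simps power2_eq_square power3_eq_cube)
  finally show ?thesis
    by (simp add: power_divide)
qed

lemma ec_double_x_square:
  fixes a :: "'a::field"
  assumes "(2::'a) \<noteq> 0" "on_curve a 0 Q" "ec_add a Q Q = Pt x' y'"
  shows "\<exists>s. x' = s^2"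
proof (cases Q)
  case (Pt x y)
  with assms(2) have "y^2 = x^3 + a*x"
    by (simp add: on_curve_def)
  with assms(1,3) Pt show ?thesis
    using ec_double_x by blast
qed (use assms in simp)

theorem proposition1:
  fixes t :: "'p::{finite,prime_card} mod_ring"
  assumes "CARD('p) mod 4 = 3"
  shows "elliptic_curve (- (t^2 + 1)) 0
       \<and> supersingular (- (t^2 + 1)) 0
       \<and> on_curve (- (t^2 + 1)) 0 (Pt (-1) t)
       \<and> \<not> (\<exists>Q. on_curve (- (t^2 + 1)) 0 Q \<and> ec_add (- (t^2 + 1)) Q Q = Pt (-1) t)"
proof -
  have nonsquare: "\<And>z::'p mod_ring. z^2 \<noteq> -1"
    by (rule minus_one_not_square_mod_ring[OF assms])
  have two: "(2::'p mod_ring) \<noteq> 0"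
    using nonsquare[of 1] by (auto simp: eq_neg_iff_add_eq_0)
  have "- (t^2) \<noteq> 1"
    using nonsquare[of t] by (auto simp: minus_equation_iff)
  moreover have "(4::'p mod_ring) \<noteq> 0"
    using two by (metis mult_2 no_zero_divisors numeral_Bit0)
  ultimately have "elliptic_curve (- (t^2 + 1)) 0"
    by (simp add: elliptic_curve_def)
  moreover have "supersingular (- (t^2 + 1)) 0"
    using prime_ge_2_nat[OF prime_card[where 'a='p]]
    by (simp add: supersingular_def card_on_curve_b0[OF nonsquare] mod_Suc)
  moreover have "on_curve (- (t^2 + 1)) 0 (Pt (-1) t)"
    by (simp add: on_curve_def)
  moreover have "\<not> ec_add (- (t^2 + 1)) Q Q = Pt (-1) t" if "on_curve (- (t^2 + 1)) 0 Q" for Q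
    using ec_double_x_square[OF two that] nonsquare by metis
  ultimately show ?thesis by blast
qed

end
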